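(* Let $\Sigma'$ be a set of FDs over $R$ (each with a single right-hand-side attribute), $I'$ an instance, $C\subseteq I'$ a set of tuples, $t$ a tuple over $R$, and $F\subseteq R$ a nonempty set of attributes. Run the procedure Find_Assignment$(t,F,I',\Sigma',C)$ described in the context. Then the procedure terminates and: (Soundness) if it returns a tuple $t_c$, then $t_c[B]=t[B]$ for every $B\in F$, and for every $t'\in I'\setminus C$ and every FD $X\rightarrow A\in\Sigma'$ it is not the case that $t_c[X]=t'[X]$ and $t_c[A]\neq t'[A]$; (Completeness) if there exists a tuple $t_g$ (cells holding constants or variables) with $t_g[B]=t[B]$ for all $B\in F$ such that for every $t'\in I'\setminus C$ the pair $(t_g,t')$ violates no FD of $\Sigma'$, then the procedure does not return $\phi$.
   Context: Instances are V-instances: each cell $t[A]$ holds a constant of $Dom(A)$ or a variable $v^A_i$; two cells are equal iff they hold the same constant or the same variable. For a set of attributes $X$, $t[X]=t'[X]$ means equality on every attribute of $X$. A pair of tuples $(t_1,t_2)$ violates $X\rightarrow A$ iff $t_1[X]=t_2[X]$ and $t_1[A]\neq t_2[A]$. Procedure Find_Assignment$(t,F,I',\Sigma',C)$: (1) Set $Fixed:=F$ and build a tuple $t_c$ with $t_c[B]=t[B]$ for $B\in Fixed$ and $t_c[B]$ equal to a new variable (not occurring anywhere else) for $B\notin Fixed$. (2) While there exist $t'\in I'\setminus C$ and an FD $X\rightarrow A\in\Sigma'$ with $t_c[X]=t'[X]$ and $t_c[A]\neq t'[A]$: if $A\in Fixed$, return $\phi$ (no assignment); otherwise set $t_c[A]:=t'[A]$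 and add $A$ to $Fixed$. (3) When no such $t'$ and FD exist, return $t_c$. *)

theory Defs
  imports Main
begin

text \<open>Cells of a V-instance: a constant, or a variable v^A_i (indexed by attribute A and i).\<close>
datatype ('a, 'c) cell = Const 'c | Var 'a nat

type_synonym ('a, 'c) tuple = "'a \<Rightarrow> ('a, 'c) cell"

type_synonym 'a fd = "'a set \<times> 'a"

definition agree :: "('a, 'c) tuple \<Rightarrow> ('a, 'c) tuple \<Rightarrow> 'a set \<Rightarrow> bool" where
  "agree t1 t2 X \<longleftrightarrow> (\<forall>B\<in>X. t1 B = t2 B)"

definition violates :: "('a, 'c) tuple \<Rightarrow> ('a, 'c) tuple \<Rightarrow> 'a fd \<Rightarrow> bool" where
  "violates t1 t2 fd \<longleftrightarrow> agree t1 t2 (fst fd) \<and> t1 (snd fd) \<noteq> t2 (snd fd)"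

definition is_var :: "('a, 'c) cell \<Rightarrow> bool" where
  "is_var c \<longleftrightarrow> (\<exists>A i. c = Var A i)"

text \<open>Step (1): admissible initial tuples t_c. Attributes in F copy t; every other attribute
  of R gets a new variable, occurring nowhere in t, in I', or elsewhere in t_c.\<close>
definition fa_init ::
  "'a set \<Rightarrow> ('a, 'c) tuple \<Rightarrow> 'a set \<Rightarrow> ('a, 'c) tuple set \<Rightarrow> ('a, 'c) tuple \<Rightarrow> bool" where
  "fa_init R t F I' tc \<longleftrightarrow>
     (\<forall>B\<in>F. tc B = t B) \<and>
     (\<forall>B\<in>R - F. is_var (tc B) \<and>
        (\<forall>D\<in>R. tc B \<noteq> t D) \<and>
        (\<forall>t'\<in>I'. \<forall>D\<in>R. tc B \<noteq> t' D) \<and>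
        (\<forall>D\<in>R. D \<noteq> B \<longrightarrow> tc B \<noteq> tc D))"

datatype ('a, 'c) fa_state =
    Running "('a, 'c) tuple" "'a set"   \<comment> \<open>current t_c and the set Fixed\<close>
  | Returned "('a, 'c) tuple"
  | NoAssignment

text \<open>One step of the (nondeterministic) while loop of Find_Assignment(t,F,I',Sigma',C).\<close>
inductive fa_step ::
  "('a, 'c) tuple set \<Rightarrow> 'a fd set \<Rightarrow> ('a, 'c) tuple set \<Rightarrow>
   ('a, 'c) fa_state \<Rightarrow> ('a, 'c) fa_state \<Rightarrow> bool"
  for I' Sigma' C where
  fail: "\<lbrakk> t' \<in> I' - C; (X, A) \<in> Sigma'; agree tc t' X; tc A \<noteq> t' A; A \<in> Fixed \<rbrakk>
         \<Longrightarrow> fa_step I' Sigma' C (Running tc Fixed) NoAssignment"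
| assign: "\<lbrakk> t' \<in> I' - C; (X, A) \<in> Sigma'; agree tc t' X; tc A \<noteq> t' A; A \<notin> Fixed \<rbrakk>
         \<Longrightarrow> fa_step I' Sigma' C (Running tc Fixed) (Running (tc(A := t' A)) (insert A Fixed))"
| ret: "\<lbrakk> \<not> (\<exists>t'\<in>I' - C. \<exists>(X, A)\<in>Sigma'. agree tc t' X \<and> tc A \<noteq> t' A) \<rbrakk>
         \<Longrightarrow> fa_step I' Sigma' C (Running tc Fixed) (Returned tc)"

end

theory Submission
  imports Defs
begin

(* Termination: a step from Running tc Fixed either ends the run or fixes one
   further attribute of R, so card (R - Fixed) strictly decreases, while every
   running state has a successor.  Hence no run is infinite and some run
   reaches a final answer.

   Soundness: attributes of F are fixed from the start and only unfixed
   attributes are ever overwritten, so t_c keeps t's values on F; a tuple is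
   returned only when the loop condition fails, which is the required
   non-violation property.

   Completeness: given a good tuple tg, the run keeps t_c equal to tg on Fixed
   and to the initial tuple elsewhere.  Unfixed cells hold fresh variables, so
   an LHS on which t_c agrees with some t' in I' lies inside Fixed, where t_c
   coincides with tg.  A failing step would then exhibit a violation by tg,
   and an assigning step copies exactly tg's value.  So phi is unreachable. *)

lemma rtranclp_invariant:
  assumes "r\<^sup>*\<^sup>* s0 s" and "P s0" and "\<And>s s'. r s s' \<Longrightarrow> P s \<Longrightarrow> P s'"
  shows "P s"
  using assms(1) by (induction rule: rtranclp_induct) (auto intro: assms(2,3))

text \<open>Choosing an index above all variable indices in the finitely many cells of
  t and I' restricted to R yields fresh variables, hence an admissible t_c.\<close>
lemma fa_init_exists:
  fixes t :: "('a, 'c) tuple"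
  assumes "finite R" and "finite I'"
  shows "\<exists>tc0. fa_init R t F I' tc0"
proof -
  define U where "U = t ` R \<union> (\<Union>t'\<in>I'. t' ` R)"
  have "finite U" using assms unfolding U_def by auto
  define idx :: "('a, 'c) cell \<Rightarrow> nat" where
    "idx c = (case c of Const _ \<Rightarrow> 0 | Var _ i \<Rightarrow> i)" for c
  define N where "N = Suc (Max (idx ` U))"
  have fresh: "Var B N \<notin> U" for B
  proof
    assume "Var B N \<in> U"
    then have "idx (Var B N) \<le> Max (idx ` U)" using \<open>finite U\<close> by (intro Max_ge) auto
    then show False unfolding idx_def N_def by simp
  qed
  define tc0 where "tc0 B = (if B \<in> F then t B else Var B N)" for B
  have "fa_init R t F I' tc0"
    unfolding fa_init_def
  proof (intro conjI ballI impI)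
    fix B assume "B \<in> F" then show "tc0 B = t B" unfolding tc0_def by simp
  next
    fix B assume "B \<in> R - F" then show "is_var (tc0 B)" unfolding tc0_def is_var_def by auto
  next
    fix B D assume "B \<in> R - F" "D \<in> R"
    then show "tc0 B \<noteq> t D" using fresh[of B] unfolding tc0_def U_def by auto
  next
    fix B t' D assume "B \<in> R - F" "t' \<in> I'" "D \<in> R"
    then show "tc0 B \<noteq> t' D" using fresh[of B] unfolding tc0_def U_def by auto
  next
    fix B D assume "B \<in> R - F" "D \<in> R" "D \<noteq> B"
    then show "tc0 B \<noteq> tc0 D" using fresh[of B] unfolding tc0_def U_def by auto
  qed
  then show ?thesis by blast
qed

lemma running_can_step: "\<exists>s'. fa_step I' Sigma' C (Running tc Fixed) s'"
proof (cases "\<exists>t'\<in>I' - C. \<exists>(X, A)\<in>Sigma'. agree tc t' X \<and> tc A \<noteq> t' A")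
  case True
  then obtain t' X A where "t' \<in> I' - C" "(X, A) \<in> Sigma'" "agree tc t' X" "tc A \<noteq> t' A"
    by auto
  then show ?thesis by (cases "A \<in> Fixed") (blast intro: fa_step.fail fa_step.assign)+
next
  case False
  then show ?thesis by (blast intro: fa_step.ret)
qed

lemma running_step_progress:
  assumes "\<forall>(X, A)\<in>Sigma'. X \<subseteq> R \<and> A \<in> R" and "finite R"
    and "fa_step I' Sigma' C (Running tc Fixed) (Running tc' Fixed')" and "Fixed \<subseteq> R"
  shows "Fixed' \<subseteq> R \<and> card (R - Fixed') < card (R - Fixed)"
  using assms(3)
proof cases
  case (assign t' X A)
  then have "A \<in> R" using assms(1) by auto
  then have "card (R - insert A Fixed) < card (R - Fixed)"
    using assign assms(2) by (intro psubset_card_mono) auto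
  then show ?thesis using assign \<open>A \<in> R\<close> assms(4) by auto
qed

text \<open>No run from a state with Fixed \<subseteq> R is infinite: along a run the measure
  card (R - Fixed) drops at every step.\<close>
lemma no_infinite_run:
  assumes "\<forall>(X, A)\<in>Sigma'. X \<subseteq> R \<and> A \<in> R" and "finite R" and "F \<subseteq> R"
  shows "\<not> (\<exists>f. f 0 = Running tc0 F \<and> (\<forall>n. fa_step I' Sigma' C (f n) (f (Suc n))))"
proof
  assume "\<exists>f. f 0 = Running tc0 F \<and> (\<forall>n. fa_step I' Sigma' C (f n) (f (Suc n)))"
  then obtain f where f0: "f 0 = Running tc0 F"
    and steps: "\<And>n. fa_step I' Sigma' C (f n) (f (Suc n))" by blast
  have running: "\<exists>tc Fixed. f n = Running tc Fixed" for n
    using steps[of n] by (cases rule: fa_step.cases) auto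
  have bound: "\<exists>tc Fixed. f n = Running tc Fixed \<and> Fixed \<subseteq> R \<and> card (R - Fixed) + n \<le> card (R - F)"
    for n
  proof (induction n)
    case 0
    then show ?case using f0 assms(3) by auto
  next
    case (Suc n)
    then obtain tc Fixed where fn: "f n = Running tc Fixed" "Fixed \<subseteq> R"
      "card (R - Fixed) + n \<le> card (R - F)" by blast
    obtain tc' Fixed' where fSn: "f (Suc n) = Running tc' Fixed'" using running by blast
    have "Fixed' \<subseteq> R \<and> card (R - Fixed') < card (R - Fixed)"
      using running_step_progress[OF assms(1,2)] steps[of n] fn fSn by simp
    then show ?case using fn fSn by auto
  qed
  from bound[of "Suc (card (R - F))"] show False by auto
qed

lemma final_state_reachable:
  assumes "\<forall>(X, A)\<in>Sigma'. X \<subseteq> R \<and> A \<in> R" and "finite R"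
  shows "Fixed \<subseteq> R \<Longrightarrow> \<exists>r. (fa_step I' Sigma' C)\<^sup>*\<^sup>* (Running tc Fixed) r \<and>
                              (r = NoAssignment \<or> (\<exists>tc. r = Returned tc))"
proof (induction "card (R - Fixed)" arbitrary: tc Fixed rule: less_induct)
  case less
  obtain s' where step: "fa_step I' Sigma' C (Running tc Fixed) s'"
    using running_can_step by blast
  show ?case
  proof (cases s')
    case (Running tc' Fixed')
    then have "Fixed' \<subseteq> R \<and> card (R - Fixed') < card (R - Fixed)"
      using running_step_progress[OF assms] step less.prems by simp
    then obtain r where "(fa_step I' Sigma' C)\<^sup>*\<^sup>* s' r"
      "r = NoAssignment \<or> (\<exists>tc. r = Returned tc)"
      using less.hyps Running by blast
    then show ?thesis using step by (blast intro: converse_rtranclp_into_rtranclp)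
  qed (use step in auto)
qed

definition keeps_on :: "'a set \<Rightarrow> ('a, 'c) tuple \<Rightarrow> ('a, 'c) fa_state \<Rightarrow> bool" where
  "keeps_on F t s = (case s of
       Running tc Fixed \<Rightarrow> F \<subseteq> Fixed \<and> (\<forall>B\<in>F. tc B = t B)
     | Returned tc \<Rightarrow> (\<forall>B\<in>F. tc B = t B)
     | NoAssignment \<Rightarrow> True)"

text \<open>Only unfixed attributes are overwritten, so keeps_on is a step invariant.\<close>
lemma keeps_on_step:
  assumes "fa_step I' Sigma' C s s'" and "keeps_on F t s"
  shows "keeps_on F t s'"
  using assms by (cases rule: fa_step.cases) (auto simp: keeps_on_def)

text \<open>A returned tuple violates no FD with a tuple of I' - C: it is returned
  exactly when the loop condition fails.\<close>
lemma returned_is_consistent: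
  assumes "(fa_step I' Sigma' C)\<^sup>*\<^sup>* (Running tc0 Fixed) (Returned tc)"
  shows "\<forall>t'\<in>I' - C. \<forall>(X, A)\<in>Sigma'. \<not> (agree tc t' X \<and> tc A \<noteq> t' A)"
proof -
  obtain s where "fa_step I' Sigma' C s (Returned tc)"
    using assms by (cases rule: rtranclp.cases) auto
  then show ?thesis by (auto elim: fa_step.cases)
qed

definition tracks :: "'a set \<Rightarrow> 'a set \<Rightarrow> ('a, 'c) tuple \<Rightarrow> ('a, 'c) tuple \<Rightarrow>
    ('a, 'c) fa_state \<Rightarrow> bool" where
  "tracks R F tc0 tg s = (case s of
       Running tc Fixed \<Rightarrow> F \<subseteq> Fixed \<and> Fixed \<subseteq> R \<and>
         (\<forall>B\<in>R - Fixed. tc B = tc0 B) \<and> (\<forall>B\<in>Fixed. tc B = tg B)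
     | Returned tc \<Rightarrow> True
     | NoAssignment \<Rightarrow> False)"

text \<open>Unfixed cells still hold fresh variables, which occur in no tuple of I';
  so any set of attributes of R on which t_c agrees with a tuple of I' is fixed.\<close>
lemma agreement_only_on_fixed:
  assumes "fa_init R t F I' tc0" and "F \<subseteq> Fixed"
    and "\<forall>B\<in>R - Fixed. tc B = tc0 B"
    and "t' \<in> I'" and "X \<subseteq> R" and "agree tc t' X"
  shows "X \<subseteq> Fixed"
proof
  fix B assume "B \<in> X"
  show "B \<in> Fixed"
  proof (rule ccontr)
    assume "B \<notin> Fixed"
    moreover have "B \<in> R" using assms(5) \<open>B \<in> X\<close> by blast
    ultimately have "tc0 B = t' B" "B \<in> R - F"
      using assms(2,3,6) \<open>B \<in> X\<close> unfolding agree_def by auto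
    then show False using assms(1,4) \<open>B \<in> R\<close> unfolding fa_init_def by blast
  qed
qed

text \<open>Tracking a good tuple is a step invariant: a failing step would make tg
  violate an FD, and an assigning step copies tg's value.\<close>
lemma tracks_step:
  assumes fds: "\<forall>(X, A)\<in>Sigma'. X \<subseteq> R \<and> A \<in> R"
    and init: "fa_init R t F I' tc0"
    and good: "\<forall>t'\<in>I' - C. \<forall>fd\<in>Sigma'. \<not> violates tg t' fd"
    and step: "fa_step I' Sigma' C s s'" and inv: "tracks R F tc0 tg s"
  shows "tracks R F tc0 tg s'"
  using step
proof cases
  case (fail t' X A tc Fixed)
  have F_fixed: "F \<subseteq> Fixed" and untouched: "\<forall>B\<in>R - Fixed. tc B = tc0 B"
    and on_fixed: "\<forall>B\<in>Fixed. tc B = tg B"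
    using inv fail(1) unfolding tracks_def by auto
  have "X \<subseteq> R" using fds fail(4) by auto
  then have "X \<subseteq> Fixed"
    using agreement_only_on_fixed[OF init F_fixed untouched] fail(3,5) by blast
  then have "agree tg t' X"
    using on_fixed fail(5) unfolding agree_def by (simp add: subset_iff)
  moreover have "tg A \<noteq> t' A" using on_fixed fail(6,7) by auto
  ultimately have "violates tg t' (X, A)" unfolding violates_def by simp
  then show ?thesis using good fail(3,4) by blast
next
  case (assign t' X A tc Fixed)
  have F_fixed: "F \<subseteq> Fixed" and fixed_R: "Fixed \<subseteq> R"
    and untouched: "\<forall>B\<in>R - Fixed. tc B = tc0 B" and on_fixed: "\<forall>B\<in>Fixed. tc B = tg B"
    using inv assign(1) unfolding tracks_def by auto
  have "X \<subseteq> R" using fds assign(4) by auto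
  then have "X \<subseteq> Fixed"
    using agreement_only_on_fixed[OF init F_fixed untouched] assign(3,5) by blast
  then have "agree tg t' X"
    using on_fixed assign(5) unfolding agree_def by (simp add: subset_iff)
  then have "tg A = t' A" using good assign(3,4) unfolding violates_def by fastforce
  moreover have "A \<in> R" using fds assign by auto
  ultimately show ?thesis
    using F_fixed fixed_R untouched on_fixed assign unfolding tracks_def by auto
qed (simp add: tracks_def)

theorem lemma2:
  fixes R F :: "'a set" and t :: "('a, 'c) tuple"
    and I' C :: "('a, 'c) tuple set" and Sigma' :: "'a fd set"
  assumes "finite R" and "finite I'" and "finite Sigma'"
    and "\<forall>(X, A)\<in>Sigma'. X \<subseteq> R \<and> A \<in> R"
    and "C \<subseteq> I'"
    and "F \<subseteq> R" and "F \<noteq> {}"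
  shows
    \<comment> \<open>an initial tuple t_c as in step (1) exists\<close>
    "(\<exists>tc0. fa_init R t F I' tc0) \<and>
     (\<forall>tc0. fa_init R t F I' tc0 \<longrightarrow>
        \<comment> \<open>termination: no infinite run, and some run reaches a final answer\<close>
        (\<not> (\<exists>f. f 0 = Running tc0 F \<and> (\<forall>n. fa_step I' Sigma' C (f n) (f (Suc n))))) \<and>
        (\<exists>r. (fa_step I' Sigma' C)\<^sup>*\<^sup>* (Running tc0 F) r \<and>
             (r = NoAssignment \<or> (\<exists>tc. r = Returned tc))) \<and>
        \<comment> \<open>soundness\<close>
        (\<forall>tc. (fa_step I' Sigma' C)\<^sup>*\<^sup>* (Running tc0 F) (Returned tc) \<longrightarrow>
            (\<forall>B\<in>F. tc B = t B) \<and>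
            (\<forall>t'\<in>I' - C. \<forall>(X, A)\<in>Sigma'. \<not> (agree tc t' X \<and> tc A \<noteq> t' A))) \<and>
        \<comment> \<open>completeness\<close>
        ((\<exists>tg. (\<forall>B\<in>F. tg B = t B) \<and>
               (\<forall>t'\<in>I' - C. \<forall>fd\<in>Sigma'. \<not> violates tg t' fd)) \<longrightarrow>
            \<not> (fa_step I' Sigma' C)\<^sup>*\<^sup>* (Running tc0 F) NoAssignment))"
proof (intro conjI allI impI)
  show "\<exists>tc0. fa_init R t F I' tc0" using fa_init_exists assms(1,2) .
next
  fix tc0 assume init: "fa_init R t F I' tc0"
  show "\<not> (\<exists>f. f 0 = Running tc0 F \<and> (\<forall>n. fa_step I' Sigma' C (f n) (f (Suc n))))"
    using no_infinite_run assms(1,4,6) by blast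
  show "\<exists>r. (fa_step I' Sigma' C)\<^sup>*\<^sup>* (Running tc0 F) r \<and> (r = NoAssignment \<or> (\<exists>tc. r = Returned tc))"
    using final_state_reachable assms(1,4,6) by blast
  fix tc assume run: "(fa_step I' Sigma' C)\<^sup>*\<^sup>* (Running tc0 F) (Returned tc)"
  have "keeps_on F t (Running tc0 F)"
    using init by (simp add: keeps_on_def fa_init_def)
  then have "keeps_on F t (Returned tc)"
    using keeps_on_step by (rule rtranclp_invariant[OF run])
  then show "\<forall>B\<in>F. tc B = t B" by (simp add: keeps_on_def)
  show "\<forall>t'\<in>I' - C. \<forall>(X, A)\<in>Sigma'. \<not> (agree tc t' X \<and> tc A \<noteq> t' A)"
    using returned_is_consistent[OF run] .
next
  fix tc0 assume init: "fa_init R t F I' tc0"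
    and "\<exists>tg. (\<forall>B\<in>F. tg B = t B) \<and> (\<forall>t'\<in>I' - C. \<forall>fd\<in>Sigma'. \<not> violates tg t' fd)"
  then obtain tg where on_F: "\<forall>B\<in>F. tg B = t B"
    and good: "\<forall>t'\<in>I' - C. \<forall>fd\<in>Sigma'. \<not> violates tg t' fd" by blast
  have "tracks R F tc0 tg (Running tc0 F)"
    using init on_F assms(6) by (auto simp: tracks_def fa_init_def)
  then have "tracks R F tc0 tg s" if "(fa_step I' Sigma' C)\<^sup>*\<^sup>* (Running tc0 F) s" for s
    using tracks_step[OF assms(4) init good] by (rule rtranclp_invariant[OF that])
  then show "\<not> (fa_step I' Sigma' C)\<^sup>*\<^sup>* (Running tc0 F) NoAssignment"
    by (fastforce simp: tracks_def)
qed

end
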